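(* Let $N\ge 3$, let $a>0$, $b>0$, and let $g:\mathbb{R}\to\mathbb{R}$ be continuous. A function $u\in C^2(\mathbb{R}^N)\cap\mathcal{D}^{1,2}(\mathbb{R}^N)$ is a solution of $$-\Big(a+b\int_{\mathbb{R}^N}|\nabla u|^2\Big)\Delta u=g(u)\quad\text{in }\mathbb{R}^N$$ if and only if there exist $v\in C^2(\mathbb{R}^N)\cap\mathcal{D}^{1,2}(\mathbb{R}^N)$ solving $$-\Delta v=g(v)\quad\text{in }\mathbb{R}^N$$ and $t>0$ such that $t^2a+t^{4-N}b\int_{\mathbb{R}^N}|\nabla v|^2=1$ and $u(x)=v(tx)$ for all $x\in\mathbb{R}^N$.
   Context: $\mathcal{D}^{1,2}(\mathbb{R}^N)$ denotes the completion of $C_c^\infty(\mathbb{R}^N)$ with respect to the norm $\left(\int_{\mathbb{R}^N}|\nabla u|^2\right)^{1/2}$. Solutions are understood in the classical (pointwise) sense. *)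

theory Defs
  imports "HOL-Analysis.Analysis"
begin

text \<open>Functions on R^N are modelled as maps real^'n \<Rightarrow> real, N = CARD('n).\<close>

definition dirline :: "('a::finite) \<Rightarrow> (real^'a \<Rightarrow> real) \<Rightarrow> real^'a \<Rightarrow> real \<Rightarrow> real" where
  "dirline i u x = (\<lambda>t. u (x + t *\<^sub>R axis i 1))"

definition partial :: "('a::finite) \<Rightarrow> (real^'a \<Rightarrow> real) \<Rightarrow> real^'a \<Rightarrow> real" where
  "partial i u x = deriv (dirline i u x) 0"

fun iterpartial :: "('a::finite) list \<Rightarrow> (real^'a \<Rightarrow> real) \<Rightarrow> real^'a \<Rightarrow> real" where
  "iterpartial [] u = u"
| "iterpartial (i # is) u = partial i (iterpartial is u)"

definition Ck :: "nat \<Rightarrow> (real^'a::finite \<Rightarrow> real) \<Rightarrow> bool" where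
  "Ck k u \<longleftrightarrow> (\<forall>is. length is \<le> k \<longrightarrow>
       continuous_on UNIV (iterpartial is u) \<and>
       (length is < k \<longrightarrow> (\<forall>i x. dirline i (iterpartial is u) x differentiable (at 0))))"

definition smooth :: "(real^'a::finite \<Rightarrow> real) \<Rightarrow> bool" where
  "smooth u \<longleftrightarrow> (\<forall>k. Ck k u)"

definition grad :: "(real^'a::finite \<Rightarrow> real) \<Rightarrow> real^'a \<Rightarrow> real^'a" where
  "grad u x = (\<chi> i. partial i u x)"

definition laplacian :: "(real^'a::finite \<Rightarrow> real) \<Rightarrow> real^'a \<Rightarrow> real" where
  "laplacian u x = (\<Sum>i\<in>UNIV. partial i (partial i u) x)"

definition dirichlet :: "(real^'a::finite \<Rightarrow> real) \<Rightarrow> real" where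
  "dirichlet u = (\<integral>x. (norm (grad u x))\<^sup>2 \<partial>lborel)"

text \<open>Membership in D^{1,2}(R^N) (N \<ge> 3): u is the limit of a Cauchy sequence (w.r.t. the
  Dirichlet norm) of C_c^\<infinity> functions, the completion being realised inside L^{2^*},
  2^* = 2N/(N-2), via the Sobolev embedding.\<close>
definition D12 :: "(real^'a::finite \<Rightarrow> real) \<Rightarrow> bool" where
  "D12 u \<longleftrightarrow> (\<exists>\<phi> :: nat \<Rightarrow> real^'a \<Rightarrow> real.
     (\<forall>k. smooth (\<phi> k) \<and> compact (closure {x. \<phi> k x \<noteq> 0})) \<and>
     (\<forall>e>0. \<exists>K. \<forall>k\<ge>K. \<forall>m\<ge>K.
        (\<integral>\<^sup>+x. ennreal ((norm (grad (\<phi> k) x - grad (\<phi> m) x))\<^sup>2) \<partial>lborel) < ennreal e) \<and>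
     ((\<lambda>k. \<integral>\<^sup>+x. ennreal (\<bar>\<phi> k x - u x\<bar> powr (2 * real CARD('a) / (real CARD('a) - 2))) \<partial>lborel)
        \<longlonglongrightarrow> 0))"

end

theory Submission imports Defs begin

text \<open>Under the dilation \<open>u\<^sub>s x = u (s x)\<close> every \<open>k\<close>-th order partial derivative picks up
  a factor \<open>s\<^sup>k\<close>, Lebesgue measure on \<open>\<real>\<^sup>N\<close> a factor \<open>|s|\<^sup>-\<^sup>N\<close>, and membership in
  \<open>C\<^sup>2\<close> and \<open>D\<^sup>1\<^sup>,\<^sup>2\<close> is preserved. Hence \<open>\<Delta>u\<^sub>t(x) = t\<^sup>2 \<Delta>u(tx)\<close> and
  \<open>\<integral>|\<nabla>u\<^sub>t|\<^sup>2 = t\<^sup>2\<^sup>-\<^sup>N \<integral>|\<nabla>u|\<^sup>2\<close>. If \<open>u = v\<^sub>t\<close>, the Kirchhoff coefficient therefore satisfies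
  \<open>(a + b \<integral>|\<nabla>u|\<^sup>2) t\<^sup>2 = t\<^sup>2 a + t\<^sup>4\<^sup>-\<^sup>N b \<integral>|\<nabla>v|\<^sup>2\<close>, and the two equations correspond exactly
  when this quantity is 1; for a given solution \<open>u\<close> one takes \<open>t = (a + b \<integral>|\<nabla>u|\<^sup>2)\<^sup>-\<^sup>1\<^sup>/\<^sup>2\<close>.\<close>

lemma Ck_differentiable:
  "Ck k u \<Longrightarrow> length is < k \<Longrightarrow> dirline i (iterpartial is u) x differentiable (at 0)"
  unfolding Ck_def by auto

lemma Ck_continuous_on:
  "Ck k u \<Longrightarrow> length is \<le> k \<Longrightarrow> continuous_on UNIV (iterpartial is u)"
  unfolding Ck_def by auto

lemma Ck_mono: "Ck m u \<Longrightarrow> k \<le> m \<Longrightarrow> Ck k u"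
  unfolding Ck_def by (meson le_trans less_le_trans)

lemma Ck_continuous: "Ck k u \<Longrightarrow> continuous_on UNIV u"
  using Ck_continuous_on[of k u "[]"] by simp

lemma deriv_scaled_at_0:
  fixes h :: "real \<Rightarrow> real"
  assumes "h differentiable (at 0)"
  shows "(\<lambda>t. c * h (s * t)) differentiable (at 0)"
    and "deriv (\<lambda>t. c * h (s * t)) 0 = c * s * deriv h 0"
proof -
  have "DERIV h (s * 0) :> deriv h 0"
    using assms DERIV_deriv_iff_real_differentiable by simp
  moreover have "DERIV (\<lambda>t. s * t) 0 :> s"
    by (auto intro!: derivative_eq_intros)
  ultimately have "DERIV (\<lambda>t. h (s * t)) 0 :> deriv h 0 * s"
    by (rule DERIV_chain2)
  then have "DERIV (\<lambda>t. c * h (s * t)) 0 :> c * s * deriv h 0"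
    by (metis DERIV_cmult mult.assoc mult.commute)
  then show "(\<lambda>t. c * h (s * t)) differentiable (at 0)"
    and "deriv (\<lambda>t. c * h (s * t)) 0 = c * s * deriv h 0"
    by (auto simp: real_differentiable_def DERIV_imp_deriv)
qed

lemma dirline_dilation:
  "dirline i (\<lambda>x. c * w (s *\<^sub>R x)) x = (\<lambda>t. c * dirline i w (s *\<^sub>R x) (s * t))"
  by (simp add: dirline_def scaleR_add_right)

lemma iterpartial_dilation:
  assumes "\<And>js i x. length js < length is \<Longrightarrow> dirline i (iterpartial js u) x differentiable (at 0)"
  shows "iterpartial is (\<lambda>x. u (s *\<^sub>R x)) = (\<lambda>x. s ^ length is * iterpartial is u (s *\<^sub>R x))"
  using assms
proof (induction "is")
  case Nil
  then show ?case by simp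
next
  case (Cons i "is")
  then have IH: "iterpartial is (\<lambda>x. u (s *\<^sub>R x)) = (\<lambda>x. s ^ length is * iterpartial is u (s *\<^sub>R x))"
    by simp
  have "dirline i (iterpartial is u) y differentiable (at 0)" for y
    using Cons.prems by simp
  then show ?case
    by (simp add: IH partial_def dirline_dilation deriv_scaled_at_0 fun_eq_iff)
qed

lemma Ck_dilation:
  assumes "Ck k u"
  shows "Ck k (\<lambda>x. u (s *\<^sub>R x))"
  unfolding Ck_def
proof (intro allI impI conjI)
  fix "is" :: "'a list" assume len: "length is \<le> k"
  have dil: "iterpartial is (\<lambda>x. u (s *\<^sub>R x)) = (\<lambda>x. s ^ length is * iterpartial is u (s *\<^sub>R x))"
    using len by (intro iterpartial_dilation Ck_differentiable[OF assms]) simp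
  show "continuous_on UNIV (iterpartial is (\<lambda>x. u (s *\<^sub>R x)))"
    unfolding dil
    by (intro continuous_on_mult continuous_on_const
        continuous_on_compose2[OF Ck_continuous_on[OF assms len]])
       (auto intro: continuous_intros)
  fix i x assume "length is < k"
  then show "dirline i (iterpartial is (\<lambda>x. u (s *\<^sub>R x))) x differentiable (at 0)"
    unfolding dil dirline_dilation
    by (intro deriv_scaled_at_0 Ck_differentiable[OF assms])
qed

lemma partial_dilation:
  assumes "Ck 1 u"
  shows "partial i (\<lambda>x. u (s *\<^sub>R x)) x = s * partial i u (s *\<^sub>R x)"
  using iterpartial_dilation[of "[i]" u s] Ck_differentiable[OF assms] by (simp add: fun_eq_iff)

lemma grad_dilation:
  assumes "Ck 1 u"
  shows "grad (\<lambda>x. u (s *\<^sub>R x)) x = s *\<^sub>R grad u (s *\<^sub>R x)"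
  by (simp add: grad_def vec_eq_iff partial_dilation[OF assms])

lemma laplacian_dilation:
  assumes "Ck 2 u"
  shows "laplacian (\<lambda>x. u (s *\<^sub>R x)) x = s\<^sup>2 * laplacian u (s *\<^sub>R x)"
proof -
  have "partial i (partial i (\<lambda>x. u (s *\<^sub>R x))) x = s\<^sup>2 * partial i (partial i u) (s *\<^sub>R x)" for i
    using iterpartial_dilation[of "[i, i]" u s] Ck_differentiable[OF assms]
    by (simp add: fun_eq_iff power2_eq_square)
  then show ?thesis
    by (simp add: laplacian_def sum_distrib_left)
qed

lemma grad_measurable:
  assumes "Ck 1 u"
  shows "grad u \<in> borel_measurable borel"
proof -
  have "continuous_on UNIV (partial i u)" for i
    using Ck_continuous_on[OF assms, of "[i]"] by simp
  then show ?thesis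
    unfolding grad_def by (intro borel_measurable_continuous_onI continuous_on_vec_lambda)
qed

lemma nn_integral_lborel_dilation:
  fixes f :: "'a::euclidean_space \<Rightarrow> ennreal"
  assumes s: "s \<noteq> 0" and f[measurable]: "f \<in> borel_measurable borel"
  shows "(\<integral>\<^sup>+x. f (s *\<^sub>R x) \<partial>lborel) = ennreal (1 / \<bar>s\<bar> ^ DIM('a)) * (\<integral>\<^sup>+x. f x \<partial>lborel)"
proof -
  have "(\<integral>\<^sup>+x. f x \<partial>lborel)
      = (\<integral>\<^sup>+x. f x \<partial>density (distr lborel borel (\<lambda>x. 0 + s *\<^sub>R x)) (\<lambda>_. \<bar>s\<bar> ^ DIM('a)))"
    using lborel_affine[OF s, of "0::'a"] by simp
  also have "\<dots> = ennreal (\<bar>s\<bar> ^ DIM('a)) * (\<integral>\<^sup>+x. f (s *\<^sub>R x) \<partial>lborel)"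
    by (simp add: nn_integral_density nn_integral_distr nn_integral_cmult)
  finally have "ennreal (1 / \<bar>s\<bar> ^ DIM('a)) * (\<integral>\<^sup>+x. f x \<partial>lborel)
      = (ennreal (1 / \<bar>s\<bar> ^ DIM('a)) * ennreal (\<bar>s\<bar> ^ DIM('a))) * (\<integral>\<^sup>+x. f (s *\<^sub>R x) \<partial>lborel)"
    by (simp add: mult.assoc)
  also have "ennreal (1 / \<bar>s\<bar> ^ DIM('a)) * ennreal (\<bar>s\<bar> ^ DIM('a)) = 1"
    using s by (simp add: ennreal_mult[symmetric])
  finally show ?thesis by simp
qed

lemma nn_integral_norm2_dilation:
  fixes G :: "'a::euclidean_space \<Rightarrow> 'b::real_normed_vector"
  assumes s: "s \<noteq> 0" and [measurable]: "G \<in> borel_measurable borel"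
  shows "(\<integral>\<^sup>+x. ennreal ((norm (s *\<^sub>R G (s *\<^sub>R x)))\<^sup>2) \<partial>lborel)
       = ennreal (s\<^sup>2 / \<bar>s\<bar> ^ DIM('a)) * (\<integral>\<^sup>+x. ennreal ((norm (G x))\<^sup>2) \<partial>lborel)"
proof -
  have "(\<integral>\<^sup>+x. ennreal ((norm (s *\<^sub>R G (s *\<^sub>R x)))\<^sup>2) \<partial>lborel)
      = ennreal (s\<^sup>2) * (\<integral>\<^sup>+x. ennreal ((norm (G (s *\<^sub>R x)))\<^sup>2) \<partial>lborel)"
    by (simp add: power_mult_distrib ennreal_mult nn_integral_cmult)
  also have "\<dots> = ennreal (s\<^sup>2) * (ennreal (1 / \<bar>s\<bar> ^ DIM('a)) * (\<integral>\<^sup>+x. ennreal ((norm (G x))\<^sup>2) \<partial>lborel))"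
    by (subst nn_integral_lborel_dilation[OF s]) simp_all
  finally show ?thesis
    by (simp add: mult.assoc[symmetric] ennreal_mult[symmetric])
qed

lemma dirichlet_nonneg: "dirichlet u \<ge> 0"
  unfolding dirichlet_def by (rule integral_nonneg_AE) simp

lemma dirichlet_dilation:
  fixes u :: "real^'n::finite \<Rightarrow> real"
  assumes "Ck 1 u" and s: "s \<noteq> 0"
  shows "dirichlet (\<lambda>x. u (s *\<^sub>R x)) = s\<^sup>2 / \<bar>s\<bar> ^ CARD('n) * dirichlet u"
proof -
  have [measurable]: "grad u \<in> borel_measurable borel" "grad (\<lambda>x. u (s *\<^sub>R x)) \<in> borel_measurable borel"
    using grad_measurable assms Ck_dilation by blast+
  have "dirichlet w = enn2real (\<integral>\<^sup>+x. ennreal ((norm (grad w x))\<^sup>2) \<partial>lborel)"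
    if [measurable]: "grad w \<in> borel_measurable borel" for w :: "real^'n \<Rightarrow> real"
    unfolding dirichlet_def by (rule integral_eq_nn_integral) auto
  then show ?thesis
    using nn_integral_norm2_dilation[OF s, of "grad u"]
    by (simp add: grad_dilation[OF assms(1)] enn2real_mult)
qed

lemma compact_closure_support_dilation:
  fixes f :: "'a::euclidean_space \<Rightarrow> 'b::zero"
  assumes "compact (closure {x. f x \<noteq> 0})" and s: "s \<noteq> 0"
  shows "compact (closure {x. f (s *\<^sub>R x) \<noteq> 0})"
proof -
  have "{x. f (s *\<^sub>R x) \<noteq> 0} = (*\<^sub>R) (1 / s) ` {x. f x \<noteq> 0}"
  proof (intro set_eqI iffI)
    fix x assume "x \<in> {x. f (s *\<^sub>R x) \<noteq> 0}"
    then show "x \<in> (*\<^sub>R) (1 / s) ` {x. f x \<noteq> 0}"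
      using s by (intro image_eqI[of _ _ "s *\<^sub>R x"]) auto
  qed (use s in auto)
  moreover have "bounded {x. f x \<noteq> 0}"
    using assms(1) compact_closure by blast
  ultimately show ?thesis
    using bounded_scaling compact_closure by metis
qed

lemma nn_integral_grad_diff_dilation:
  fixes f h :: "real^'n::finite \<Rightarrow> real"
  assumes "Ck 1 f" "Ck 1 h" and s: "s \<noteq> 0"
  shows "(\<integral>\<^sup>+x. ennreal ((norm (grad (\<lambda>x. f (s *\<^sub>R x)) x - grad (\<lambda>x. h (s *\<^sub>R x)) x))\<^sup>2) \<partial>lborel)
       = ennreal (s\<^sup>2 / \<bar>s\<bar> ^ CARD('n)) * (\<integral>\<^sup>+x. ennreal ((norm (grad f x - grad h x))\<^sup>2) \<partial>lborel)"
proof -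
  have [measurable]: "grad f \<in> borel_measurable borel" "grad h \<in> borel_measurable borel"
    using grad_measurable assms(1,2) by blast+
  show ?thesis
    using nn_integral_norm2_dilation[OF s, of "\<lambda>x. grad f x - grad h x"]
    by (simp add: grad_dilation[OF assms(1)] grad_dilation[OF assms(2)] scaleR_diff_right)
qed

lemma D12_dilation:
  fixes u :: "real^'n::finite \<Rightarrow> real"
  assumes "D12 u" and [measurable]: "u \<in> borel_measurable borel" and s: "s \<noteq> 0"
  shows "D12 (\<lambda>x. u (s *\<^sub>R x))"
proof -
  define p where "p = 2 * real CARD('n) / (real CARD('n) - 2)"
  obtain \<phi> :: "nat \<Rightarrow> real^'n \<Rightarrow> real" where
    sm: "\<And>k. smooth (\<phi> k)" and cp: "\<And>k. compact (closure {x. \<phi> k x \<noteq> 0})" and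
    cauchy: "\<forall>e>0. \<exists>K. \<forall>k\<ge>K. \<forall>m\<ge>K.
        (\<integral>\<^sup>+x. ennreal ((norm (grad (\<phi> k) x - grad (\<phi> m) x))\<^sup>2) \<partial>lborel) < ennreal e" and
    lim: "(\<lambda>k. \<integral>\<^sup>+x. ennreal (\<bar>\<phi> k x - u x\<bar> powr p) \<partial>lborel) \<longlonglongrightarrow> 0"
    using assms(1) unfolding D12_def p_def by blast
  define \<psi> where "\<psi> k = (\<lambda>x. \<phi> k (s *\<^sub>R x))" for k
  define c where "c = s\<^sup>2 / \<bar>s\<bar> ^ CARD('n)"
  have c: "c > 0" using s by (simp add: c_def)
  have C1: "\<And>k. Ck 1 (\<phi> k)" using sm unfolding smooth_def by blast
  have [measurable]: "\<phi> k \<in> borel_measurable borel" for k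
    using Ck_continuous[OF C1] by (rule borel_measurable_continuous_onI)
  have "smooth (\<psi> k)" for k
    using sm Ck_dilation unfolding \<psi>_def smooth_def by blast
  moreover have "compact (closure {x. \<psi> k x \<noteq> 0})" for k
    using compact_closure_support_dilation[OF cp s] by (simp add: \<psi>_def)
  moreover have "\<exists>K. \<forall>k\<ge>K. \<forall>m\<ge>K.
        (\<integral>\<^sup>+x. ennreal ((norm (grad (\<psi> k) x - grad (\<psi> m) x))\<^sup>2) \<partial>lborel) < ennreal e"
    if e: "e > 0" for e
  proof -
    obtain K where K: "\<And>k m. k \<ge> K \<Longrightarrow> m \<ge> K \<Longrightarrow>
        (\<integral>\<^sup>+x. ennreal ((norm (grad (\<phi> k) x - grad (\<phi> m) x))\<^sup>2) \<partial>lborel) < ennreal (e / c)"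
      using cauchy c e by (meson divide_pos_pos)
    have "(\<integral>\<^sup>+x. ennreal ((norm (grad (\<psi> k) x - grad (\<psi> m) x))\<^sup>2) \<partial>lborel) < ennreal e"
      if "k \<ge> K" "m \<ge> K" for k m
    proof -
      have "(\<integral>\<^sup>+x. ennreal ((norm (grad (\<psi> k) x - grad (\<psi> m) x))\<^sup>2) \<partial>lborel)
          = ennreal c * (\<integral>\<^sup>+x. ennreal ((norm (grad (\<phi> k) x - grad (\<phi> m) x))\<^sup>2) \<partial>lborel)"
        unfolding \<psi>_def c_def by (rule nn_integral_grad_diff_dilation[OF C1 C1 s])
      also have "\<dots> < ennreal c * ennreal (e / c)"
        using K[OF that] c by (intro ennreal_mult_strict_left_mono) auto
      also have "\<dots> = ennreal e"
        using c e by (simp add: ennreal_mult[symmetric])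
      finally show ?thesis .
    qed
    then show ?thesis by blast
  qed
  moreover have "(\<lambda>k. \<integral>\<^sup>+x. ennreal (\<bar>\<psi> k x - u (s *\<^sub>R x)\<bar> powr p) \<partial>lborel) \<longlonglongrightarrow> 0"
  proof -
    have "(\<lambda>k. ennreal (1 / \<bar>s\<bar> ^ CARD('n)) * (\<integral>\<^sup>+x. ennreal (\<bar>\<phi> k x - u x\<bar> powr p) \<partial>lborel))
        \<longlonglongrightarrow> ennreal (1 / \<bar>s\<bar> ^ CARD('n)) * 0"
      using lim by (intro ennreal_tendsto_cmult) auto
    moreover have "(\<integral>\<^sup>+x. ennreal (\<bar>\<psi> k x - u (s *\<^sub>R x)\<bar> powr p) \<partial>lborel)
        = ennreal (1 / \<bar>s\<bar> ^ CARD('n)) * (\<integral>\<^sup>+x. ennreal (\<bar>\<phi> k x - u x\<bar> powr p) \<partial>lborel)" for k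
      unfolding \<psi>_def
      by (rule nn_integral_lborel_dilation[OF s, where f="\<lambda>x. ennreal (\<bar>\<phi> k x - u x\<bar> powr p)", simplified])
         measurable
    ultimately show ?thesis
      by simp
  qed
  ultimately show ?thesis
    unfolding D12_def p_def by blast
qed

lemma kirchhoff_coefficient_dilation:
  fixes v :: "real^'n::finite \<Rightarrow> real"
  assumes "Ck 1 v" and t: "t > 0"
  shows "(a + b * dirichlet (\<lambda>x. v (t *\<^sub>R x))) * t\<^sup>2
       = t\<^sup>2 * a + t powr (4 - real CARD('n)) * b * dirichlet v"
proof -
  have "t powr (4 - real CARD('n)) = t\<^sup>2 * t\<^sup>2 / t ^ CARD('n)"
    using t by (simp add: powr_diff powr_realpow power4_eq_xxxx power2_eq_square)
  then show ?thesis
    using t by (simp add: dirichlet_dilation[OF assms(1)] field_simps)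
qed

lemma laplace_equation_dilation_iff:
  assumes "Ck 2 v" and t: "t \<noteq> 0" and c: "c * t\<^sup>2 = 1"
  shows "(\<forall>x. - c * laplacian (\<lambda>x. v (t *\<^sub>R x)) x = g (v (t *\<^sub>R x))) \<longleftrightarrow>
         (\<forall>y. - laplacian v y = g (v y))"
proof -
  have "- c * laplacian (\<lambda>x. v (t *\<^sub>R x)) x = - laplacian v (t *\<^sub>R x)" for x
    using c by (simp add: laplacian_dilation[OF assms(1)] mult.assoc[symmetric])
  moreover have "(\<forall>x. P (t *\<^sub>R x)) \<longleftrightarrow> (\<forall>y. P y)" for P :: "real^'n \<Rightarrow> bool"
    using t by (metis scaleR_one divideR_right)
  ultimately show ?thesis
    by simp
qed

theorem theorem1p1:
  fixes a b :: real and g :: "real \<Rightarrow> real" and u :: "real^'n::finite \<Rightarrow> real"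
  assumes "CARD('n) \<ge> 3" and "a > 0" and "b > 0" and "continuous_on UNIV g"
    and "Ck 2 u" and "D12 u"
  shows "(\<forall>x. - (a + b * dirichlet u) * laplacian u x = g (u x)) \<longleftrightarrow>
         (\<exists>(v :: real^'n \<Rightarrow> real) t. Ck 2 v \<and> D12 v \<and> (\<forall>x. - laplacian v x = g (v x)) \<and>
            t > 0 \<and> t\<^sup>2 * a + t powr (4 - real CARD('n)) * b * dirichlet v = 1 \<and>
            (\<forall>x. u x = v (t *\<^sub>R x)))"
proof
  assume eq: "\<forall>x. - (a + b * dirichlet u) * laplacian u x = g (u x)"
  define t where "t = 1 / sqrt (a + b * dirichlet u)"
  define v where "v = (\<lambda>y. u ((1 / t) *\<^sub>R y))"
  have "a + b * dirichlet u > 0"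
    using assms(2,3) dirichlet_nonneg[of u] by (simp add: add_pos_nonneg)
  then have coeff: "(a + b * dirichlet u) * t\<^sup>2 = 1" and t: "t > 0"
    by (simp_all add: t_def power_divide)
  have uv: "u = (\<lambda>x. v (t *\<^sub>R x))"
    using t by (simp add: v_def)
  have v: "Ck 2 v" "D12 v"
    using Ck_dilation[OF assms(5)] D12_dilation[OF assms(6)] Ck_continuous[OF assms(5)] t
    by (auto simp: v_def borel_measurable_continuous_onI)
  have "\<forall>y. - laplacian v y = g (v y)"
    using laplace_equation_dilation_iff[OF v(1) _ coeff, of g] eq t unfolding uv by simp
  moreover have "t\<^sup>2 * a + t powr (4 - real CARD('n)) * b * dirichlet v = 1"
    using kirchhoff_coefficient_dilation[OF Ck_mono[OF v(1)] t, of a b] coeff uv by simp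
  ultimately show "\<exists>v t. Ck 2 v \<and> D12 v \<and> (\<forall>x. - laplacian v x = g (v x)) \<and> t > 0 \<and>
      t\<^sup>2 * a + t powr (4 - real CARD('n)) * b * dirichlet v = 1 \<and> (\<forall>x. u x = v (t *\<^sub>R x))"
    using v t uv by blast
next
  assume "\<exists>v t. Ck 2 v \<and> D12 v \<and> (\<forall>x. - laplacian v x = g (v x)) \<and> t > 0 \<and>
      t\<^sup>2 * a + t powr (4 - real CARD('n)) * b * dirichlet v = 1 \<and> (\<forall>x. u x = v (t *\<^sub>R x))"
  then obtain v :: "real^'n \<Rightarrow> real" and t where v: "Ck 2 v" "\<forall>x. - laplacian v x = g (v x)"
    and t: "t > 0" "t\<^sup>2 * a + t powr (4 - real CARD('n)) * b * dirichlet v = 1"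
    and "\<forall>x. u x = v (t *\<^sub>R x)" by blast
  then have uv: "u = (\<lambda>x. v (t *\<^sub>R x))"
    by (simp add: fun_eq_iff)
  have "(a + b * dirichlet u) * t\<^sup>2 = 1"
    using kirchhoff_coefficient_dilation[OF Ck_mono[OF v(1)] t(1), of a b] t(2) uv by simp
  from laplace_equation_dilation_iff[OF v(1) _ this[unfolded uv], of g]
  show "\<forall>x. - (a + b * dirichlet u) * laplacian u x = g (u x)"
    using v(2) t(1) unfolding uv by simp
qed

end
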